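(* For the Hydra game played on any finite rooted unweighted tree $T$ of height $h_T$ with $L_T$ leaves, the total (expected) cost of the algorithm $\mathrm{HERC}$ is at most $O(h_T\cdot(1+\log L_T))$, i.e., there is an absolute constant $C$ such that for every such tree and every (oblivious) adversary, the total cost of $\mathrm{HERC}$ is at most $C\,h_T(1+\log L_T)$.
   Context: Hydra game: played between an online algorithm and an oblivious adversary on a fixed finite rooted unweighted tree $T$ known in advance. Each node is asleep, alive, or dead. Initially the root $r_T$ is alive and all other nodes are asleep. In each step the adversary picks an alive node $w$, makes it dead, and makes all its children alive (so all ancestors of alive nodes are dead and all their descendants asleep). The algorithm must always remain at an alive node (initially the root); if its node is killed it must move to an alive node $w'$, paying $\mathrm{dist}(w,w')$, the shortest-path distance in $T$. The game ends when all nodes except one are dead; the goal is to minimize total movement cost. $\mathrm{rank}(u)$ is the number of non-dead leaves in the subtree of $u$. The randomized algorithm $\mathrm{HERC}$ keeps its position distributed according to $\eta$, where $\eta(u)=\mathrm{rank}(u)/\mathrm{rank}(r_T)$ for alive $u$ and $\eta(u)=0$ otherwise; when an alive node $u$ is killed, if $u$ is not a leaf its probability is distributed to its children proportionally to their ranks, and if $u$ is a leaf all other probabilities are scaled by $1/(1-\eta(u))$. Its cost is the transport cost: moving probability mass $p$ from $u$ to $w$ costs $p\cdot \mathrm{dist}(u,w)$ (which equals the expected movement cost of a corresponding randomized strategy). *)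

theory Defs
  imports Complex_Main
begin

text \<open>A finite rooted tree is represented by a finite, prefix-closed set of
  nat lists: the root is the empty list, and the children of a node u are the
  nodes u @ [i] in the set.  Every finite rooted tree is isomorphic to one of these.\<close>

definition is_tree :: "nat list set \<Rightarrow> bool" where
  "is_tree T \<longleftrightarrow> finite T \<and> [] \<in> T \<and> (\<forall>u i. u @ [i] \<in> T \<longrightarrow> u \<in> T)"

definition children :: "nat list set \<Rightarrow> nat list \<Rightarrow> nat list set" where
  "children T u = {v \<in> T. \<exists>i. v = u @ [i]}"

definition is_leaf :: "nat list set \<Rightarrow> nat list \<Rightarrow> bool" where
  "is_leaf T u \<longleftrightarrow> u \<in> T \<and> children T u = {}"

definition leaves :: "nat list set \<Rightarrow> nat list set" where
  "leaves T = {u. is_leaf T u}"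

definition height :: "nat list set \<Rightarrow> nat" where
  "height T = Max (length ` T)"

definition adjacent :: "nat list \<Rightarrow> nat list \<Rightarrow> bool" where
  "adjacent u v \<longleftrightarrow> (\<exists>i. v = u @ [i]) \<or> (\<exists>i. u = v @ [i])"

definition tdist :: "nat list set \<Rightarrow> nat list \<Rightarrow> nat list \<Rightarrow> nat" where
  "tdist T u v = (LEAST n. \<exists>p. length p = Suc n \<and> p ! 0 = u \<and> p ! n = v \<and>
       set p \<subseteq> T \<and> (\<forall>i<n. adjacent (p ! i) (p ! Suc i)))"

text \<open>Game state: the set D of dead nodes.  A node is alive if it is not dead
  and it is the root or its parent is dead; otherwise (not dead) it is asleep.\<close>

definition alive :: "nat list set \<Rightarrow> nat list set \<Rightarrow> nat list \<Rightarrow> bool" where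
  "alive T D u \<longleftrightarrow> u \<in> T \<and> u \<notin> D \<and> (u = [] \<or> butlast u \<in> D)"

definition game_over :: "nat list set \<Rightarrow> nat list set \<Rightarrow> bool" where
  "game_over T D \<longleftrightarrow> card (T - D) \<le> 1"

definition rank :: "nat list set \<Rightarrow> nat list set \<Rightarrow> nat list \<Rightarrow> nat" where
  "rank T D u = card {l \<in> leaves T. l \<notin> D \<and> (\<exists>s. l = u @ s)}"

definition eta :: "nat list set \<Rightarrow> nat list set \<Rightarrow> nat list \<Rightarrow> real" where
  "eta T D u = (if alive T D u then real (rank T D u) / real (rank T D []) else 0)"

text \<open>Transport cost of HERC when the adversary kills the alive node w in state D:
  a non-leaf w sends its mass to its children (each child c receives its new mass
  eta c, over distance tdist w c); a leaf w sends its mass eta w to every other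
  node v in proportion to v's new (rescaled) mass.\<close>

definition herc_step_cost :: "nat list set \<Rightarrow> nat list set \<Rightarrow> nat list \<Rightarrow> real" where
  "herc_step_cost T D w =
     (if is_leaf T w
      then eta T D w * (\<Sum>v\<in>T - {w}. eta T (insert w D) v * real (tdist T w v))
      else (\<Sum>c\<in>children T w. eta T (insert w D) c * real (tdist T w c)))"

text \<open>An oblivious adversary is a fixed sequence of nodes to kill; it is valid if
  each killed node is alive at its time and the game has not ended yet.\<close>

fun valid_seq :: "nat list set \<Rightarrow> nat list set \<Rightarrow> nat list list \<Rightarrow> bool" where
  "valid_seq T D [] = True"
| "valid_seq T D (w # ws) =
     (\<not> game_over T D \<and> alive T D w \<and> valid_seq T (insert w D) ws)"

fun herc_cost :: "nat list set \<Rightarrow> nat list set \<Rightarrow> nat list list \<Rightarrow> real" where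
  "herc_cost T D [] = 0"
| "herc_cost T D (w # ws) = herc_step_cost T D w + herc_cost T (insert w D) ws"

end

theory Submission
  imports Defs
begin

text \<open>
  HERC is analysed with the potential \<open>A(D)\<close>, the mean number of dead ancestors of a
  surviving leaf; it lies in \<open>[0, h]\<close> and vanishes initially.  Let \<open>R\<close> be the number of
  surviving leaves.  Killing an inner node \<open>w\<close> moves the mass \<open>rank(w)/R\<close> to the children
  of \<open>w\<close>, over distance 1, and raises \<open>A\<close> by exactly \<open>rank(w)/R\<close>, since every leaf
  below \<open>w\<close> gains one dead ancestor.  Killing a leaf moves mass at most \<open>1/R\<close> over distance
  at most \<open>2h\<close>, and dropping one value in \<open>[0, h]\<close> from a mean of \<open>R\<close> values lowers it by at
  most \<open>h/R\<close>.  Hence the total cost plus the final potential is at most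
  \<open>h + 3h H\<^sub>L \<le> 4h (1 + ln L)\<close>, where \<open>H\<^sub>L\<close> is the \<open>L\<close>-th harmonic number.
\<close>

definition harm :: "nat \<Rightarrow> real" where
  "harm n = (\<Sum>k=1..n. 1 / real k)"

lemma harm_Suc: "harm (Suc n) = harm n + 1 / real (Suc n)"
  unfolding harm_def by simp

lemma harm_nonneg: "0 \<le> harm n"
  unfolding harm_def by (intro sum_nonneg) auto

lemma harm_le_1_plus_ln: "0 < n \<Longrightarrow> harm n \<le> 1 + ln (real n)"
proof (induction n)
  case (Suc n)
  show ?case
  proof (cases "n = 0")
    case False
    then have "ln (real n / real (Suc n)) \<le> real n / real (Suc n) - 1"
      by (intro ln_le_minus_one) auto
    then have "1 / real (Suc n) \<le> ln (real (Suc n)) - ln (real n)"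
      using False by (simp add: ln_div field_simps)
    then show ?thesis using Suc False by (simp add: harm_Suc)
  qed (simp add: harm_def)
qed simp

lemma tree_prefix_closed: "is_tree T \<Longrightarrow> u @ s \<in> T \<Longrightarrow> u \<in> T"
  by (induction s rule: rev_induct) (auto simp: is_tree_def simp flip: append_assoc)

lemma length_le_height: "is_tree T \<Longrightarrow> v \<in> T \<Longrightarrow> length v \<le> height T"
  unfolding height_def is_tree_def by auto

lemma finite_leaves: "is_tree T \<Longrightarrow> finite (leaves T)"
  unfolding leaves_def is_leaf_def is_tree_def by (auto intro: finite_subset)

lemma leaf_append_eq_Nil:
  assumes "is_tree T" "is_leaf T w" "w @ s \<in> T"
  shows "s = []"
proof (rule ccontr)
  assume "s \<noteq> []"
  then have "w @ [hd s] \<in> T"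
    using tree_prefix_closed[OF assms(1), of "w @ [hd s]" "tl s"] assms(3) by simp
  then show False using assms(2) unfolding is_leaf_def children_def by auto
qed

inductive walk :: "nat list set \<Rightarrow> nat list \<Rightarrow> nat list \<Rightarrow> nat \<Rightarrow> bool" for T where
  walk_refl: "walk T u u 0"
| walk_step: "walk T u v n \<Longrightarrow> adjacent v x \<Longrightarrow> x \<in> T \<Longrightarrow> walk T u x (Suc n)"

lemma walk_imp_path:
  assumes "walk T u v n" "u \<in> T"
  shows "\<exists>p. length p = Suc n \<and> p ! 0 = u \<and> p ! n = v \<and> set p \<subseteq> T \<and>
           (\<forall>i<n. adjacent (p ! i) (p ! Suc i))"
  using assms
proof (induction rule: walk.induct)
  case (walk_refl u)
  then show ?case by (intro exI[of _ "[u]"]) auto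
next
  case (walk_step u v n x)
  then obtain p where p: "length p = Suc n" "p ! 0 = u" "p ! n = v" "set p \<subseteq> T"
    "\<forall>i<n. adjacent (p ! i) (p ! Suc i)" by blast
  show ?case
  proof (intro exI[of _ "p @ [x]"] conjI allI impI)
    fix i assume "i < Suc n"
    then show "adjacent ((p @ [x]) ! i) ((p @ [x]) ! Suc i)"
      using p walk_step by (cases "i < n") (auto simp: nth_append less_Suc_eq)
  qed (use p walk_step in \<open>auto simp: nth_append\<close>)
qed

lemma tdist_le_walk: "walk T u v n \<Longrightarrow> u \<in> T \<Longrightarrow> tdist T u v \<le> n"
  unfolding tdist_def by (rule Least_le) (rule walk_imp_path)

lemma walk_trans:
  assumes "walk T u v m" "walk T v x n"
  shows "walk T u x (m + n)"
  using assms(2,1) by (induction rule: walk.induct) (auto intro: walk.intros)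

lemma walk_from_root: "is_tree T \<Longrightarrow> v \<in> T \<Longrightarrow> walk T [] v (length v)"
proof (induction v rule: rev_induct)
  case (snoc x xs)
  then have "xs \<in> T" by (auto intro: tree_prefix_closed)
  then show ?case using snoc by (auto intro!: walk_step simp: adjacent_def)
qed (simp add: walk_refl)

lemma walk_to_root: "is_tree T \<Longrightarrow> v \<in> T \<Longrightarrow> walk T v [] (length v)"
proof (induction v rule: rev_induct)
  case (snoc x xs)
  then have "xs \<in> T" by (auto intro: tree_prefix_closed)
  then have "walk T (xs @ [x]) xs 1"
    using walk_step[OF walk_refl] by (auto simp: adjacent_def)
  then show ?case using walk_trans snoc \<open>xs \<in> T\<close> by fastforce
qed (simp add: walk_refl)

lemma tdist_le_2_height:
  assumes "is_tree T" "u \<in> T" "v \<in> T"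
  shows "tdist T u v \<le> 2 * height T"
proof -
  have "walk T u v (length u + length v)"
    using walk_trans walk_to_root walk_from_root assms by blast
  then have "tdist T u v \<le> length u + length v" using tdist_le_walk assms(2) by blast
  moreover have "length u \<le> height T" "length v \<le> height T"
    using length_le_height assms by auto
  ultimately show ?thesis by linarith
qed

lemma tdist_child_le_1: "w \<in> T \<Longrightarrow> c \<in> children T w \<Longrightarrow> tdist T w c \<le> 1"
  using tdist_le_walk walk_step[OF walk_refl]
  by (fastforce simp: children_def adjacent_def)

definition prefix_closed :: "nat list set \<Rightarrow> bool" where
  "prefix_closed D \<longleftrightarrow> (\<forall>u s. u @ s \<in> D \<longrightarrow> u \<in> D)"

lemma prefix_closed_insert_alive:
  assumes "prefix_closed D" "alive T D w"
  shows "prefix_closed (insert w D)"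
  unfolding prefix_closed_def
proof (intro allI impI)
  fix u s assume us: "u @ s \<in> insert w D"
  show "u \<in> insert w D"
  proof (cases "u @ s \<in> D \<or> s = []")
    case False
    then have "butlast (u @ s) \<in> D" using us assms(2) unfolding alive_def by auto
    then have "u @ butlast s \<in> D" using False by (simp add: butlast_append)
    then show ?thesis using assms(1) unfolding prefix_closed_def by blast
  qed (use us assms(1) in \<open>auto simp: prefix_closed_def\<close>)
qed

lemma alive_append_eq_Nil:
  assumes "prefix_closed D" "alive T D u" "alive T D (u @ t)"
  shows "t = []"
proof (rule ccontr)
  assume "t \<noteq> []"
  then have "u @ butlast t \<in> D" using assms(3) unfolding alive_def by (simp add: butlast_append)
  then show False using assms(1,2) unfolding prefix_closed_def alive_def by blast
qed

definition surviving_leaves :: "nat list set \<Rightarrow> nat list set \<Rightarrow> nat list set" where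
  "surviving_leaves T D = {l \<in> leaves T. l \<notin> D}"

lemma rank_root: "rank T D [] = card (surviving_leaves T D)"
  unfolding rank_def surviving_leaves_def by simp

lemma surviving_leaves_insert:
  "surviving_leaves T (insert w D) = surviving_leaves T D - {w}"
  unfolding surviving_leaves_def by auto

lemma surviving_leaves_insert_inner:
  "\<not> is_leaf T w \<Longrightarrow> surviving_leaves T (insert w D) = surviving_leaves T D"
  unfolding surviving_leaves_def leaves_def by auto

lemma finite_surviving_leaves: "is_tree T \<Longrightarrow> finite (surviving_leaves T D)"
  unfolding surviving_leaves_def using finite_leaves by auto

lemma rank_insert_le: "is_tree T \<Longrightarrow> rank T (insert w D) u \<le> rank T D u"
  unfolding rank_def by (rule card_mono) (auto simp: finite_leaves)

lemma sum_card_le_card_if_disjoint: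
  assumes "finite I" "finite B" "\<And>i. i \<in> I \<Longrightarrow> A i \<subseteq> B"
    "\<And>i j. i \<in> I \<Longrightarrow> j \<in> I \<Longrightarrow> i \<noteq> j \<Longrightarrow> A i \<inter> A j = {}"
  shows "(\<Sum>i\<in>I. card (A i)) \<le> card B"
proof -
  have "(\<Sum>i\<in>I. card (A i)) = card (\<Union>i\<in>I. A i)"
    using assms by (intro card_UN_disjoint[symmetric]) (auto intro: finite_subset)
  also have "\<dots> \<le> card B" using assms(2,3) by (intro card_mono) auto
  finally show ?thesis .
qed

lemma sum_rank_children_le:
  assumes "is_tree T"
  shows "(\<Sum>c\<in>children T w. rank T D c) \<le> rank T D w"
  unfolding rank_def
proof (rule sum_card_le_card_if_disjoint)
  show "finite (children T w)"
    using assms unfolding is_tree_def children_def by auto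
qed (auto simp: children_def finite_leaves[OF assms])

lemma eta_nonneg: "0 \<le> eta T D v"
  unfolding eta_def by auto

lemma sum_eta_le_1:
  assumes T: "is_tree T" and D: "prefix_closed D"
  shows "(\<Sum>v\<in>T. eta T D v) \<le> 1"
proof -
  define R where "R = rank T D []"
  define Alive where "Alive = {v \<in> T. alive T D v}"
  have fin: "finite T" using T unfolding is_tree_def by simp
  have "(\<Sum>v\<in>Alive. rank T D v) \<le> card (surviving_leaves T D)"
    unfolding rank_def
  proof (rule sum_card_le_card_if_disjoint)
    fix i j assume ij: "i \<in> Alive" "j \<in> Alive" "i \<noteq> j"
    show "{l \<in> leaves T. l \<notin> D \<and> (\<exists>s. l = i @ s)} \<inter> {l \<in> leaves T. l \<notin> D \<and> (\<exists>s. l = j @ s)} = {}"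
    proof (rule ccontr)
      assume "\<not> ?thesis"
      then obtain s s' where "i @ s = j @ s'" by auto
      then obtain us where "i = j @ us \<or> j = i @ us"
        by (auto simp: append_eq_append_conv2)
      then show False using alive_append_eq_Nil[OF D] ij unfolding Alive_def by auto
    qed
  qed (auto simp: Alive_def surviving_leaves_def fin finite_leaves[OF T])
  then have "(\<Sum>v\<in>Alive. real (rank T D v)) \<le> real R"
    unfolding R_def rank_root by (metis of_nat_le_iff of_nat_sum)
  moreover have "(\<Sum>v\<in>T. eta T D v) = (\<Sum>v\<in>Alive. real (rank T D v) / real R)"
    unfolding eta_def R_def Alive_def using fin by (simp add: sum.inter_filter)
  then have "(\<Sum>v\<in>T. eta T D v) = (\<Sum>v\<in>Alive. real (rank T D v)) / real R"
    by (simp add: sum_divide_distrib)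
  ultimately show ?thesis by (auto simp: divide_le_eq_1)
qed

definition dead_ancestors :: "nat list set \<Rightarrow> nat list \<Rightarrow> nat" where
  "dead_ancestors D l = card {u \<in> D. \<exists>s. l = u @ s}"

lemma prefixes_subset_take:
  "{u. \<exists>s. l = u @ s \<and> P s} \<subseteq> (\<lambda>k. take k l) ` {k. k \<le> length l \<and> P (drop k l)}"
proof
  fix u assume "u \<in> {u. \<exists>s. l = u @ s \<and> P s}"
  then obtain s where "l = u @ s" "P s" by blast
  then show "u \<in> (\<lambda>k. take k l) ` {k. k \<le> length l \<and> P (drop k l)}"
    by (intro image_eqI[of _ _ "length u"]) auto
qed

lemma finite_prefixes: "finite {u. \<exists>s. l = u @ s}"
  using finite_subset[OF prefixes_subset_take[where P = "\<lambda>_. True"]] by simp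

lemma dead_ancestors_le_length:
  assumes "l \<notin> D"
  shows "dead_ancestors D l \<le> length l"
proof -
  have "{u \<in> D. \<exists>s. l = u @ s} \<subseteq> {u. \<exists>s. l = u @ s \<and> s \<noteq> []}"
    using assms by auto
  also have "\<dots> \<subseteq> (\<lambda>k. take k l) ` {..<length l}"
  proof (rule order_trans[OF prefixes_subset_take])
    show "(\<lambda>k. take k l) ` {k. k \<le> length l \<and> drop k l \<noteq> []} \<subseteq> (\<lambda>k. take k l) ` {..<length l}"
      by (intro image_mono) auto
  qed
  finally have "dead_ancestors D l \<le> card ((\<lambda>k. take k l) ` {..<length l})"
    unfolding dead_ancestors_def by (intro card_mono) auto
  also have "\<dots> \<le> length l" using card_image_le[of "{..<length l}"] by simp
  finally show ?thesis .
qed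

lemma dead_ancestors_le_height:
  "is_tree T \<Longrightarrow> l \<in> surviving_leaves T D \<Longrightarrow> dead_ancestors D l \<le> height T"
  using dead_ancestors_le_length length_le_height
  unfolding surviving_leaves_def leaves_def is_leaf_def by fastforce

lemma dead_ancestors_insert:
  assumes "w \<notin> D"
  shows "dead_ancestors (insert w D) l = dead_ancestors D l + (if \<exists>s. l = w @ s then 1 else 0)"
proof -
  have "{u \<in> insert w D. \<exists>s. l = u @ s} =
        (if \<exists>s. l = w @ s then insert w {u \<in> D. \<exists>s. l = u @ s} else {u \<in> D. \<exists>s. l = u @ s})"
    by auto
  moreover have "finite {u \<in> D. \<exists>s. l = u @ s}"
    using finite_prefixes by (rule finite_subset[rotated]) auto
  ultimately show ?thesis
    unfolding dead_ancestors_def using assms by auto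
qed

definition mean_dead_ancestors :: "nat list set \<Rightarrow> nat list set \<Rightarrow> real" where
  "mean_dead_ancestors T D =
     (\<Sum>l\<in>surviving_leaves T D. real (dead_ancestors D l)) / real (card (surviving_leaves T D))"

lemma mean_dead_ancestors_empty: "mean_dead_ancestors T {} = 0"
  unfolding mean_dead_ancestors_def dead_ancestors_def by simp

lemma mean_dead_ancestors_le_height:
  assumes "is_tree T"
  shows "mean_dead_ancestors T D \<le> real (height T)"
proof -
  have "(\<Sum>l\<in>surviving_leaves T D. real (dead_ancestors D l))
          \<le> real (card (surviving_leaves T D)) * real (height T)"
    using dead_ancestors_le_height[OF assms] by (intro sum_bounded_above) auto
  then show ?thesis
    unfolding mean_dead_ancestors_def
    by (cases "card (surviving_leaves T D) = 0") (auto simp: divide_le_eq mult.commute)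
qed

lemma mean_le_mean_Diff_singleton:
  fixes f :: "'a \<Rightarrow> real"
  assumes "finite A" "a \<in> A" "f a \<le> h" "\<And>x. x \<in> A \<Longrightarrow> 0 \<le> f x"
  shows "sum f A / card A \<le> sum f (A - {a}) / card (A - {a}) + h / card A"
proof -
  define Y where "Y = sum f (A - {a})"
  have sum: "sum f A = f a + Y" unfolding Y_def using assms(1,2) by (simp add: sum.remove)
  have card: "card A = Suc (card (A - {a}))" by (rule card_Suc_Diff1[OF assms(1,2), symmetric])
  have "Y / card A \<le> Y / card (A - {a})"
  proof (cases "A - {a} = {}")
    case False
    have "0 \<le> Y" unfolding Y_def using assms(4) by (intro sum_nonneg) auto
    moreover have "0 < card (A - {a})" using False assms(1) by (simp add: card_gt_0_iff)
    ultimately show ?thesis using card by (intro divide_left_mono) auto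
  next
    case True
    then show ?thesis unfolding Y_def True by simp
  qed
  moreover have "f a / card A \<le> h / card A" using assms(3) by (simp add: divide_right_mono)
  ultimately show ?thesis unfolding sum Y_def by (simp add: add_divide_distrib)
qed

lemma rank_root_insert_inner:
  "\<not> is_leaf T w \<Longrightarrow> rank T (insert w D) [] = rank T D []"
  unfolding rank_root by (simp add: surviving_leaves_insert_inner)

lemma rank_root_insert_leaf:
  assumes "is_tree T" "is_leaf T w" "w \<notin> D"
  shows "rank T D [] = Suc (rank T (insert w D) [])"
proof -
  have "w \<in> surviving_leaves T D" using assms(2,3) by (simp add: surviving_leaves_def leaves_def)
  then show ?thesis
    unfolding rank_root surviving_leaves_insert
    using card_Suc_Diff1 finite_surviving_leaves[OF assms(1)] by metis
qed

lemma mean_dead_ancestors_insert_inner: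
  assumes T: "is_tree T" and w: "alive T D w" "\<not> is_leaf T w"
  shows "mean_dead_ancestors T (insert w D) = mean_dead_ancestors T D + rank T D w / rank T D []"
proof -
  define S where "S = surviving_leaves T D"
  have S': "surviving_leaves T (insert w D) = S"
    unfolding S_def using surviving_leaves_insert_inner[OF w(2)] .
  have rank_w: "rank T D w = card {l \<in> S. \<exists>s. l = w @ s}"
    unfolding rank_def S_def surviving_leaves_def by (rule arg_cong[where f = card]) auto
  have "w \<notin> D" using w(1) unfolding alive_def by simp
  then have "real (dead_ancestors (insert w D) l)
               = real (dead_ancestors D l) + (if \<exists>s. l = w @ s then 1 else 0)" for l
    by (simp add: dead_ancestors_insert)
  then have "(\<Sum>l\<in>S. real (dead_ancestors (insert w D) l))
               = (\<Sum>l\<in>S. real (dead_ancestors D l)) + (\<Sum>l\<in>S. if \<exists>s. l = w @ s then 1 else 0)"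
    by (simp add: sum.distrib)
  also have "(\<Sum>l\<in>S. if \<exists>s. l = w @ s then 1 else 0) = real (rank T D w)"
    unfolding rank_w using finite_surviving_leaves[OF T] by (simp add: sum.If_cases S_def Int_def)
  finally have "(\<Sum>l\<in>S. real (dead_ancestors (insert w D) l))
               = (\<Sum>l\<in>S. real (dead_ancestors D l)) + rank T D w" .
  then show ?thesis
    unfolding mean_dead_ancestors_def S' rank_root S_def by (simp add: add_divide_distrib)
qed

lemma herc_step_cost_inner_le:
  assumes T: "is_tree T" and w: "alive T D w" "\<not> is_leaf T w"
  shows "herc_step_cost T D w \<le> rank T D w / rank T D []"
proof -
  define R where "R = real (rank T D [])"
  have "herc_step_cost T D w = (\<Sum>c\<in>children T w. eta T (insert w D) c * tdist T w c)"
    unfolding herc_step_cost_def using w(2) by simp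
  also have "\<dots> \<le> (\<Sum>c\<in>children T w. rank T D c / R)"
  proof (rule sum_mono)
    fix c assume c: "c \<in> children T w"
    have "eta T (insert w D) c \<le> rank T (insert w D) c / R"
      unfolding eta_def R_def rank_root_insert_inner[OF w(2)] by simp
    also have "\<dots> \<le> rank T D c / R"
      using rank_insert_le[OF T] by (simp add: R_def divide_right_mono)
    finally have "eta T (insert w D) c \<le> rank T D c / R" .
    moreover have "tdist T w c \<le> 1" using tdist_child_le_1 c w(1) unfolding alive_def by blast
    then have "eta T (insert w D) c * tdist T w c \<le> eta T (insert w D) c"
      using eta_nonneg by (simp add: mult_left_le)
    ultimately show "eta T (insert w D) c * tdist T w c \<le> rank T D c / R"
      by linarith
  qed
  also have "\<dots> = (\<Sum>c\<in>children T w. rank T D c) / R"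
    by (simp add: sum_divide_distrib)
  also have "\<dots> \<le> rank T D w / R"
  proof -
    have "(\<Sum>c\<in>children T w. real (rank T D c)) \<le> rank T D w"
      using sum_rank_children_le[OF T] by (metis of_nat_le_iff of_nat_sum)
    then show ?thesis by (simp add: R_def divide_right_mono)
  qed
  finally show ?thesis unfolding R_def .
qed

lemma mean_dead_ancestors_insert_leaf_le:
  assumes T: "is_tree T" and w: "alive T D w" "is_leaf T w"
  shows "mean_dead_ancestors T D \<le> mean_dead_ancestors T (insert w D) + height T / rank T D []"
proof -
  define S where "S = surviving_leaves T D"
  have wS: "w \<in> S" using w unfolding S_def surviving_leaves_def leaves_def alive_def by simp
  have "dead_ancestors (insert w D) l = dead_ancestors D l" if "l \<in> S - {w}" for l
  proof -
    have "\<not> (\<exists>s. l = w @ s)"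
      using that leaf_append_eq_Nil[OF T w(2)]
      unfolding S_def surviving_leaves_def leaves_def is_leaf_def by fastforce
    then show ?thesis using w(1) unfolding alive_def by (simp add: dead_ancestors_insert)
  qed
  then have "mean_dead_ancestors T (insert w D)
               = (\<Sum>l\<in>S - {w}. real (dead_ancestors D l)) / card (S - {w})"
    unfolding mean_dead_ancestors_def surviving_leaves_insert S_def by simp
  moreover have "mean_dead_ancestors T D
      \<le> (\<Sum>l\<in>S - {w}. real (dead_ancestors D l)) / card (S - {w}) + height T / card S"
    unfolding mean_dead_ancestors_def S_def[symmetric]
    using dead_ancestors_le_height[OF T] wS finite_surviving_leaves[OF T]
    by (intro mean_le_mean_Diff_singleton) (auto simp: S_def)
  ultimately show ?thesis unfolding rank_root S_def by simp
qed

lemma herc_step_cost_leaf_le: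
  assumes T: "is_tree T" and D: "prefix_closed D" and w: "alive T D w" "is_leaf T w"
  shows "herc_step_cost T D w \<le> 2 * height T / rank T D []"
proof -
  define D' where "D' = insert w D"
  have wT: "w \<in> T" using w(1) unfolding alive_def by simp
  have "rank T D w \<le> card {w}"
    unfolding rank_def using leaf_append_eq_Nil[OF T w(2)]
    by (intro card_mono) (auto simp: leaves_def is_leaf_def)
  then have eta_w: "eta T D w \<le> 1 / rank T D []"
    unfolding eta_def by (simp add: divide_right_mono)
  have "(\<Sum>v\<in>T - {w}. eta T D' v * tdist T w v) \<le> (\<Sum>v\<in>T - {w}. eta T D' v * (2 * height T))"
    using tdist_le_2_height[OF T wT] eta_nonneg
    by (intro sum_mono mult_left_mono) (auto simp flip: of_nat_mult)
  also have "\<dots> \<le> (\<Sum>v\<in>T. eta T D' v) * (2 * height T)"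
    using T eta_nonneg
    by (auto simp: sum_distrib_right is_tree_def intro!: sum_mono2)
  also have "\<dots> \<le> 2 * height T"
    using mult_right_mono[OF sum_eta_le_1[OF T prefix_closed_insert_alive[OF D w(1)]],
        of "2 * real (height T)"]
    by (simp add: D'_def)
  finally have moved: "(\<Sum>v\<in>T - {w}. eta T D' v * tdist T w v) \<le> 2 * height T" .
  have "herc_step_cost T D w = eta T D w * (\<Sum>v\<in>T - {w}. eta T D' v * tdist T w v)"
    unfolding herc_step_cost_def D'_def using w(2) by simp
  also have "\<dots> \<le> 1 / rank T D [] * (2 * height T)"
    using eta_w moved eta_nonneg by (intro mult_mono) (auto intro: sum_nonneg)
  finally show ?thesis by simp
qed

lemma herc_cost_add_mean_dead_ancestors_le:
  assumes "is_tree T" "prefix_closed D" "valid_seq T D ws"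
  shows "herc_cost T D ws + mean_dead_ancestors T D \<le> height T + 3 * height T * harm (rank T D [])"
  using assms(2,3)
proof (induction ws arbitrary: D)
  case Nil
  have "0 \<le> 3 * real (height T) * harm (rank T D [])" using harm_nonneg by simp
  then show ?case using mean_dead_ancestors_le_height[OF assms(1), of D] by simp
next
  case (Cons w ws)
  then have w: "alive T D w" and IH: "herc_cost T (insert w D) ws + mean_dead_ancestors T (insert w D)
      \<le> height T + 3 * height T * harm (rank T (insert w D) [])"
    using prefix_closed_insert_alive by auto
  show ?case
  proof (cases "is_leaf T w")
    case False
    then show ?thesis
      using IH herc_step_cost_inner_le[OF assms(1) w False]
        mean_dead_ancestors_insert_inner[OF assms(1) w False] rank_root_insert_inner[OF False]
      by simp
  next
    case True
    define R where "R = rank T (insert w D) []"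
    have R: "rank T D [] = Suc R"
      using rank_root_insert_leaf[OF assms(1) True] w unfolding R_def alive_def by simp
    have "3 * height T * harm (Suc R) = 3 * height T * harm R + 3 * height T / Suc R"
      by (simp add: harm_Suc distrib_left)
    moreover have "2 * height T / Suc R + height T / Suc R = 3 * height T / Suc R"
      by (simp flip: add_divide_distrib)
    ultimately show ?thesis
      using IH herc_step_cost_leaf_le[OF assms(1) Cons.prems(1) w True]
        mean_dead_ancestors_insert_leaf_le[OF assms(1) w True]
      unfolding R R_def[symmetric] by simp
  qed
qed

theorem theorem4:
  shows "\<exists>C::real. \<forall>T ws. is_tree T \<longrightarrow> valid_seq T {} ws \<longrightarrow>
           herc_cost T {} ws \<le> C * real (height T) * (1 + ln (real (card (leaves T))))"
proof (intro exI[of _ 4] allI impI)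
  fix T ws assume T: "is_tree T" and ws: "valid_seq T {} ws"
  define h where "h = real (height T)"
  define L where "L = card (leaves T)"
  have "rank T {} [] = L" unfolding rank_root L_def surviving_leaves_def by simp
  then have "herc_cost T {} ws \<le> h + 3 * h * harm L"
    using herc_cost_add_mean_dead_ancestors_le[OF T _ ws]
    by (simp add: prefix_closed_def mean_dead_ancestors_empty h_def)
  also have "\<dots> \<le> 4 * h * (1 + ln L)"
  proof (cases "L = 0")
    case False
    then have "harm L \<le> 1 + ln L" "0 \<le> ln L" by (simp_all add: harm_le_1_plus_ln)
    then have "3 * h * harm L \<le> 3 * h * (1 + ln L)" "0 \<le> h * ln L"
      by (auto simp: h_def intro!: mult_left_mono)
    then show ?thesis by (simp add: algebra_simps)
  qed (simp add: harm_def h_def)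
  finally show "herc_cost T {} ws \<le> 4 * real (height T) * (1 + ln (real (card (leaves T))))"
    unfolding h_def L_def .
qed

end
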